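(* For all $\psi\in \mathcal{L}^{\mathrel{|}\!\sim}_{\mathds{S}}$ and all $\mathcal{K}\subseteq \mathcal{L}^{\mathrel{|}\!\sim}_{\mathds{S}}$, we have that $\mathcal{K}\mathrel{|}\!\approx_{RC}\psi$ if and only if $M_{RC}^\mathcal{K}\Vdash \psi$.
   Context: Setting (Defeasible Restricted Standpoint Logic, DRSL). A vocabulary is $\mathcal{V}=(\mathcal{P},\mathcal{S})$ with $\mathcal{P}$ a finite set of atoms and $\mathcal{S}$ a finite set of standpoint symbols containing the universal standpoint $*$. The propositional KLM language $\mathcal{L}^{\mathrel{|}\!\sim}$ is $\phi::=\alpha\mid\alpha\mathrel{|}\!\sim\beta\mid\phi\wedge\phi$ ($\alpha,\beta$ Boolean over $\mathcal{P}$). The DRSL language $\mathcal{L}^{\mathrel{|}\!\sim}_{\mathds{S}}$ is $\psi::=\phi\mid\#_s\psi\mid\psi\wedge\psi$ with $\#\in\{\Box,\Diamond\}$, $s\in\mathcal{S}$, $\phi\in\mathcal{L}^{\mathrel{|}\!\sim}$, together with sharpening statements $s_1\preceq s_2$. A ranked interpretation is $R:\mathcal{U}\to\mathds{N}\cup\{\infty\}$ on classical valuations $\mathcal{U}$ of $\mathcal{P}$ satisfying convexity (if $R(u)<\infty$ every rank $j<R(u)$ is occupied); $R\Vdash\alpha$ iff every valuation of finite rank satisfies $\alpha$, and $R\Vdash\alpha\mathrel{|}\!\sim\beta$ iff all rank-minimal $\alpha$-valuations satisfy $\beta$. A ranked standpoint structure is $M=(\Pi,\sigma,\gamma)$ with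 $\Pi$ a nonempty set of precisifications, $\sigma:\mathcal{S}\to P(\Pi)$ assigning nonempty sets with $\sigma( * )=\Pi$, and $\gamma$ assigning to each precisification a ranked interpretation; $M,\pi\Vdash\phi$ iff $\gamma(\pi)\Vdash\phi$, $M,\pi\Vdash\Box_s\psi$ (resp. $\Diamond_s\psi$) iff $M,\pi'\Vdash\psi$ for all (resp. some) $\pi'\in\sigma(s)$, conjunction is componentwise, $M,\pi\Vdash s_1\preceq s_2$ iff $\sigma(s_1)\subseteq\sigma(s_2)$, and $M\Vdash\psi$ iff $M,\pi\Vdash\psi$ for all $\pi$. For a propositional KLM knowledge base $K$, $R^K_{RC}$ is the minimum ranked model of $K$ under the pointwise order on ranks, and RCProp$(K,\alpha\mathrel{|}\!\sim\beta)$ is true iff $R^K_{RC}\Vdash\alpha\mathrel{|}\!\sim\beta$. Let $\mathcal{K}$ be a DRSL knowledge base in normal form (each formula is $\#_s\phi$ with $\phi\in\mathcal{L}^{\mathrel{|}\!\sim}$, or a sharpening statement); $S$ is the set of standpoints occurring in $\mathcal{K}$ (assumed with $*$ to be all of $\mathcal{S}$), and $s\preceq^+t$ iff $t=s$, $t=*$, or there is a chain of sharpening statements in $\mathcal{K}$ from $s$ to $t$. The splitting: $K_s=\{\phi\mid\Box_t\phi\in\mathcal{K}, s\preceq^+t\}$; $K_s^\phi=K_s\cup\{\phi\}$ for each $\Diamond_s\phi\in\mathcal{K}$; $\text{Know}_s=\bigcup_{t\preceq^+s}(\{K_t\}\cup\{K_t^\phi\mid\Diamond_t\phi\in\mathcal{K}\})$,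 and $\text{Know}_*=\bigcup_{s\in S}\text{Know}_s$ minus $K_*$. $\mathcal{K}\mathrel{|}\!\approx_{RC}\psi$ is defined by the algorithm RCStandpoint: for $\psi=\Box_s\phi$ it holds iff RCProp$(K,\phi)$ is true for all $K\in\text{Know}_s$; for $\psi=\Diamond_s\phi$ iff it is true for some $K\in\text{Know}_s$; a formula without modal operator is treated as $\Box_*$ of it; a conjunction holds iff both conjuncts do. The structure $M_{RC}^\mathcal{K}=(\Pi,\sigma,\gamma)$ has $\Pi=\{\pi_s\mid s\in S-\{*\}\}\cup\{\pi_s^\phi\mid\Diamond_s\phi\in\mathcal{K}\}$, $\sigma(s)=\{\pi_t\mid t\preceq^+s\}\cup\{\pi_t^\phi\mid t\preceq^+s\}$, $\gamma(\pi_s)=R^{K_s}_{RC}$, $\gamma(\pi_s^\phi)=R^{K_s^\phi}_{RC}$. *)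

theory Defs
  imports Main "HOL-Library.Extended_Nat"
begin

datatype 'p bform = BTop | BBot | Atom 'p | BNeg "'p bform" | BConj "'p bform" "'p bform"
  | BDisj "'p bform" "'p bform" | BImp "'p bform" "'p bform"

datatype 'p klm = Cl "'p bform" | Cond "'p bform" "'p bform" | KAnd "'p klm" "'p klm"

datatype 's stp = Univ | Named 's

text \<open>DRSL formulas, including sharpening statements (Sharp s1 s2 means s1 \<preceq> s2).\<close>
datatype ('p, 's) drsl = Base "'p klm" | Box "'s stp" "('p, 's) drsl"
  | Dia "'s stp" "('p, 's) drsl" | DAnd "('p, 's) drsl" "('p, 's) drsl"
  | Sharp "'s stp" "'s stp"

type_synonym 'p valuation = "'p \<Rightarrow> bool"
type_synonym 'p ranked = "'p valuation \<Rightarrow> enat"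

fun evalb :: "'p valuation \<Rightarrow> 'p bform \<Rightarrow> bool" where
  "evalb u BTop = True"
| "evalb u BBot = False"
| "evalb u (Atom p) = u p"
| "evalb u (BNeg a) = (\<not> evalb u a)"
| "evalb u (BConj a b) = (evalb u a \<and> evalb u b)"
| "evalb u (BDisj a b) = (evalb u a \<or> evalb u b)"
| "evalb u (BImp a b) = (evalb u a \<longrightarrow> evalb u b)"

definition ranked_interp :: "'p ranked \<Rightarrow> bool" where
  "ranked_interp R \<longleftrightarrow> (\<forall>u. R u < \<infinity> \<longrightarrow> (\<forall>j::nat. enat j < R u \<longrightarrow> (\<exists>v. R v = enat j)))"

fun ksat :: "'p ranked \<Rightarrow> 'p klm \<Rightarrow> bool" where
  "ksat R (Cl a) = (\<forall>u. R u < \<infinity> \<longrightarrow> evalb u a)"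
| "ksat R (Cond a b) = (\<forall>u. (R u < \<infinity> \<and> evalb u a \<and>
       (\<forall>v. R v < \<infinity> \<and> evalb v a \<longrightarrow> R u \<le> R v)) \<longrightarrow> evalb u b)"
| "ksat R (KAnd f g) = (ksat R f \<and> ksat R g)"

definition ranked_model :: "'p klm set \<Rightarrow> 'p ranked \<Rightarrow> bool" where
  "ranked_model K R \<longleftrightarrow> ranked_interp R \<and> (\<forall>f\<in>K. ksat R f)"

definition rc_model :: "'p klm set \<Rightarrow> 'p ranked" where
  "rc_model K = (THE R. ranked_model K R \<and> (\<forall>R'. ranked_model K R' \<longrightarrow> (\<forall>u. R u \<le> R' u)))"

definition RCProp :: "'p klm set \<Rightarrow> 'p klm \<Rightarrow> bool" where
  "RCProp K f \<longleftrightarrow> ksat (rc_model K) f"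

text \<open>A structure is a triple (Pi, sigma, gamma) over a type 'w of precisifications.\<close>
type_synonym ('w, 'p, 's) rss = "'w set \<times> ('s stp \<Rightarrow> 'w set) \<times> ('w \<Rightarrow> 'p ranked)"

fun dsat :: "('w, 'p, 's) rss \<Rightarrow> 'w \<Rightarrow> ('p, 's) drsl \<Rightarrow> bool" where
  "dsat (Pi, sg, gm) w (Base f) = ksat (gm w) f"
| "dsat (Pi, sg, gm) w (Box s p) = (\<forall>w'\<in>sg s. dsat (Pi, sg, gm) w' p)"
| "dsat (Pi, sg, gm) w (Dia s p) = (\<exists>w'\<in>sg s. dsat (Pi, sg, gm) w' p)"
| "dsat (Pi, sg, gm) w (DAnd p q) = (dsat (Pi, sg, gm) w p \<and> dsat (Pi, sg, gm) w q)"
| "dsat (Pi, sg, gm) w (Sharp s1 s2) = (sg s1 \<subseteq> sg s2)"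

definition dmodels :: "('w, 'p, 's) rss \<Rightarrow> ('p, 's) drsl \<Rightarrow> bool" where
  "dmodels M p \<longleftrightarrow> (\<forall>w\<in>fst M. dsat M w p)"

fun normal_form :: "('p, 's) drsl \<Rightarrow> bool" where
  "normal_form (Box s (Base f)) = True"
| "normal_form (Dia s (Base f)) = True"
| "normal_form (Sharp s t) = True"
| "normal_form _ = False"

fun stps :: "('p, 's) drsl \<Rightarrow> 's stp set" where
  "stps (Base f) = {}"
| "stps (Box s p) = insert s (stps p)"
| "stps (Dia s p) = insert s (stps p)"
| "stps (DAnd p q) = stps p \<union> stps q"
| "stps (Sharp s t) = {s, t}"

definition sharper :: "('p, 's) drsl set \<Rightarrow> 's stp \<Rightarrow> 's stp \<Rightarrow> bool" where
  "sharper KK s t \<longleftrightarrow> t = s \<or> t = Univ \<or> (s, t) \<in> {(a, b). Sharp a b \<in> KK}\<^sup>+"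

definition Ks :: "('p, 's) drsl set \<Rightarrow> 's stp \<Rightarrow> 'p klm set" where
  "Ks KK s = {f. \<exists>t. Box t (Base f) \<in> KK \<and> sharper KK s t}"

definition Know :: "('p, 's) drsl set \<Rightarrow> 's stp \<Rightarrow> 'p klm set set" where
  "Know KK s = {Ks KK (Named t) | t. sharper KK (Named t) s}
     \<union> {insert f (Ks KK t) | t f. sharper KK t s \<and> Dia t (Base f) \<in> KK}"

fun query :: "('p, 's) drsl \<Rightarrow> bool" where
  "query (Base f) = True"
| "query (Box s (Base f)) = True"
| "query (Dia s (Base f)) = True"
| "query (DAnd p q) = (query p \<and> query q)"
| "query _ = False"

fun rc_entails :: "('p, 's) drsl set \<Rightarrow> ('p, 's) drsl \<Rightarrow> bool" where
  "rc_entails KK (Base f) = (\<forall>K\<in>Know KK Univ. RCProp K f)"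
| "rc_entails KK (Box s (Base f)) = (\<forall>K\<in>Know KK s. RCProp K f)"
| "rc_entails KK (Dia s (Base f)) = (\<exists>K\<in>Know KK s. RCProp K f)"
| "rc_entails KK (DAnd p q) = (rc_entails KK p \<and> rc_entails KK q)"
| "rc_entails KK _ = undefined"

datatype ('p, 's) prec = PNamed 's | PDia "'s stp" "'p klm"

fun rc_gamma :: "('p, 's) drsl set \<Rightarrow> ('p, 's) prec \<Rightarrow> 'p ranked" where
  "rc_gamma KK (PNamed s) = rc_model (Ks KK (Named s))"
| "rc_gamma KK (PDia s f) = rc_model (insert f (Ks KK s))"

definition M_RC :: "('p, 's) drsl set \<Rightarrow> (('p, 's) prec, 'p, 's) rss" where
  "M_RC KK =
    (range PNamed \<union> {PDia t f | t f. Dia t (Base f) \<in> KK},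
     \<lambda>s. {PNamed t | t. sharper KK (Named t) s}
          \<union> {PDia t f | t f. Dia t (Base f) \<in> KK \<and> sharper KK t s},
     rc_gamma KK)"

end

theory Submission
  imports Defs
begin

text \<open>The precisifications of \<open>M_RC KK\<close> visible from a standpoint \<open>s\<close> carry exactly the
  rational closures of the knowledge bases in \<open>Know KK s\<close>. Hence a box (diamond) query holds
  in the structure exactly when the formula holds in all (some) of these rational closures,
  which is what RCStandpoint checks. The universal standpoint sees every precisification, so
  unmodalised queries are covered as well.\<close>

lemma dmodels_Base:
  "dmodels (Pi, sg, gm) (Base f) \<longleftrightarrow> (\<forall>R\<in>gm ` Pi. ksat R f)"
  by (simp add: dmodels_def)

lemma dmodels_Box:
  assumes "Pi \<noteq> {}"
  shows "dmodels (Pi, sg, gm) (Box s (Base f)) \<longleftrightarrow> (\<forall>R\<in>gm ` sg s. ksat R f)"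
  using assms by (auto simp: dmodels_def)

lemma dmodels_Dia:
  assumes "Pi \<noteq> {}"
  shows "dmodels (Pi, sg, gm) (Dia s (Base f)) \<longleftrightarrow> (\<exists>R\<in>gm ` sg s. ksat R f)"
  using assms by (auto simp: dmodels_def)

lemma dmodels_DAnd: "dmodels M (DAnd p q) \<longleftrightarrow> dmodels M p \<and> dmodels M q"
  by (cases M) (auto simp: dmodels_def)

lemma M_RC_split: "M_RC KK = (fst (M_RC KK), fst (snd (M_RC KK)), rc_gamma KK)"
  by (simp add: M_RC_def)

lemma M_RC_precisifications_nonempty: "fst (M_RC KK) \<noteq> {}"
  by (simp add: M_RC_def)

lemma M_RC_precisifications_eq_sigma_Univ: "fst (M_RC KK) = fst (snd (M_RC KK)) Univ"
  by (auto simp: M_RC_def sharper_def)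

lemma image_rc_gamma_sigma: "rc_gamma KK ` fst (snd (M_RC KK)) s = rc_model ` Know KK s"
proof -
  have "fst (snd (M_RC KK)) s = PNamed ` {t. sharper KK (Named t) s}
      \<union> (\<lambda>(t, f). PDia t f) ` {(t, f). Dia t (Base f) \<in> KK \<and> sharper KK t s}"
    by (auto simp: M_RC_def)
  moreover have "Know KK s = (\<lambda>t. Ks KK (Named t)) ` {t. sharper KK (Named t) s}
      \<union> (\<lambda>(t, f). insert f (Ks KK t)) ` {(t, f). Dia t (Base f) \<in> KK \<and> sharper KK t s}"
    by (auto simp: Know_def)
  ultimately show ?thesis
    by (simp add: image_Un image_image case_prod_beta)
qed

lemma rc_entails_iff_dmodels_M_RC:
  "query \<psi> \<Longrightarrow> rc_entails KK \<psi> \<longleftrightarrow> dmodels (M_RC KK) \<psi>"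
proof (induction \<psi> rule: query.induct)
  case (1 f)
  show ?case
    by (subst M_RC_split, subst dmodels_Base)
      (simp add: RCProp_def M_RC_precisifications_eq_sigma_Univ image_rc_gamma_sigma)
next
  case (2 s f)
  show ?case
    by (subst M_RC_split, subst dmodels_Box[OF M_RC_precisifications_nonempty])
      (simp add: RCProp_def image_rc_gamma_sigma)
next
  case (3 s f)
  show ?case
    by (subst M_RC_split, subst dmodels_Dia[OF M_RC_precisifications_nonempty])
      (simp add: RCProp_def image_rc_gamma_sigma)
next
  case (4 p q)
  then show ?case
    by (simp add: dmodels_DAnd)
qed simp_all

text \<open>The correspondence is purely structural.\<close>

theorem theorem2:
  fixes KK :: "('p::finite, 's::finite) drsl set" and \<psi> :: "('p, 's) drsl"
  assumes "\<forall>\<phi>\<in>KK. normal_form \<phi>"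
    and "\<forall>s::'s. \<exists>\<phi>\<in>KK. Named s \<in> stps \<phi>"
    and "query \<psi>"
  shows "rc_entails KK \<psi> \<longleftrightarrow> dmodels (M_RC KK) \<psi>"
  using rc_entails_iff_dmodels_M_RC[OF assms(3)] .

end
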